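(* Let $E$ be a countable set, $V$ a topological vector space over a field $k$, $f:E\to V$ a function, and $M_f=(E,\mathcal{L}(f))$ the associated topological independence system. An independent set $S\in\mathcal{L}(f)$ is maximal in $\mathcal{L}(f)$ if and only if $f(e)\in\hat f(C_S(f))$ for every $e\in E$.
   Context: Let $C(f)$ be the set of $c\in k^E$ such that the sum $\sum_{e\in E}c(e)f(e)$ converges in the topology of $V$ (meaning that one of its sequences of partial sums converges absolutely), and define $\hat f:C(f)\to V$ by $\hat f(c)=\sum_{e\in E}c(e)f(e)$. For $S\subseteq E$ let $C_S(f)=\{c\in C(f): c(e)=0 \text{ for all } e\in E\setminus S\}$ and let $\hat f|_S$ be the restriction of $\hat f$ to $C_S(f)$. Then $\mathcal{L}(f)=\{S\subseteq E: \ker(\hat f|_S)=\{0\}\}$, and $M_f=(E,\mathcal{L}(f))$ is called a topological independence system. Maximality is with respect to inclusion. *)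

theory Defs
  imports "HOL-Analysis.Analysis"
begin

definition topological_field_on :: "('k::{field,topological_space}) itself \<Rightarrow> bool" where
  "topological_field_on _ \<longleftrightarrow>
     continuous_on UNIV (\<lambda>(a::'k, b). a + b) \<and>
     continuous_on UNIV (\<lambda>(a::'k, b). a * b) \<and>
     continuous_on UNIV (\<lambda>a::'k. - a) \<and>
     continuous_on (UNIV - {0}) (\<lambda>a::'k. inverse a)"

definition tvs :: "('k::{field,topological_space} \<Rightarrow> 'v::{ab_group_add,t2_space} \<Rightarrow> 'v) \<Rightarrow> bool" where
  "tvs smul \<longleftrightarrow>
     topological_field_on TYPE('k) \<and>
     (\<forall>a x y. smul a (x + y) = smul a x + smul a y) \<and>
     (\<forall>a b x. smul (a + b) x = smul a x + smul b x) \<and>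
     (\<forall>a b x. smul (a * b) x = smul a (smul b x)) \<and>
     (\<forall>x. smul 1 x = x) \<and>
     continuous_on UNIV (\<lambda>(x::'v, y). x + y) \<and>
     continuous_on UNIV (\<lambda>x::'v. - x) \<and>
     continuous_on UNIV (\<lambda>(a, x). smul a x)"

definition convC :: "('k::field \<Rightarrow> 'v::{ab_group_add,t2_space} \<Rightarrow> 'v) \<Rightarrow> 'e set \<Rightarrow> ('e \<Rightarrow> 'v) \<Rightarrow> ('e \<Rightarrow> 'k) set" where
  "convC smul E f = {c. (\<forall>e. e \<notin> E \<longrightarrow> c e = 0) \<and> (\<lambda>e. smul (c e) (f e)) summable_on E}"

definition fhat :: "('k::field \<Rightarrow> 'v::{ab_group_add,t2_space} \<Rightarrow> 'v) \<Rightarrow> 'e set \<Rightarrow> ('e \<Rightarrow> 'v) \<Rightarrow> ('e \<Rightarrow> 'k) \<Rightarrow> 'v" where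
  "fhat smul E f c = (\<Sum>\<^sub>\<infinity>e\<in>E. smul (c e) (f e))"

definition convC_S :: "('k::field \<Rightarrow> 'v::{ab_group_add,t2_space} \<Rightarrow> 'v) \<Rightarrow> 'e set \<Rightarrow> ('e \<Rightarrow> 'v) \<Rightarrow> 'e set \<Rightarrow> ('e \<Rightarrow> 'k) set" where
  "convC_S smul E f S = {c \<in> convC smul E f. \<forall>e \<in> E - S. c e = 0}"

definition indepL :: "('k::field \<Rightarrow> 'v::{ab_group_add,t2_space} \<Rightarrow> 'v) \<Rightarrow> 'e set \<Rightarrow> ('e \<Rightarrow> 'v) \<Rightarrow> 'e set set" where
  "indepL smul E f = {S. S \<subseteq> E \<and>
     {c \<in> convC_S smul E f S. fhat smul E f c = 0} = {(\<lambda>_. 0)}}"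

end

theory Submission
  imports Defs
begin

text \<open>If \<open>S\<close> is independent and \<open>S \<union> {e}\<close> is not, a nontrivial relation
  \<open>\<Sum> c(x) f(x) = 0\<close> supported on \<open>S \<union> {e}\<close> must have \<open>c(e) \<noteq> 0\<close>; dividing by \<open>-c(e)\<close>
  expresses \<open>f(e)\<close> as a convergent combination over \<open>S\<close>.  Conversely, a representation
  \<open>f(e) = \<Sum> c(x) f(x)\<close> over \<open>S\<close> with \<open>e \<notin> S\<close> becomes, after subtracting \<open>f(e)\<close>, a
  nontrivial relation supported on \<open>S \<union> {e}\<close>.\<close>

lemma tvs_smul_zero_right:
  assumes "tvs smul" shows "smul a 0 = 0"
proof -
  have "smul a (0 + 0) = smul a 0 + smul a 0" using assms unfolding tvs_def by blast
  then show ?thesis by simp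
qed

lemma tvs_smul_zero_left:
  assumes "tvs smul" shows "smul 0 x = 0"
proof -
  have "smul (0 + 0) x = smul 0 x + smul 0 x" using assms unfolding tvs_def by blast
  then show ?thesis by simp
qed

lemma tvs_smul_minus_one:
  assumes "tvs smul" shows "smul (-1) x = - x"
proof -
  have "smul (1 + -1) x = smul 1 x + smul (-1) x" and "smul 1 x = x"
    using assms unfolding tvs_def by blast+
  then show ?thesis
    using tvs_smul_zero_left[OF assms] by (simp add: eq_neg_iff_add_eq_0 add.commute)
qed

lemma tvs_smul_sum:
  assumes "tvs smul" shows "smul a (sum g F) = (\<Sum>x\<in>F. smul a (g x))"
proof (induction F rule: infinite_finite_induct)
  case (insert x F)
  then show ?case using assms unfolding tvs_def by simp
qed (simp_all add: tvs_smul_zero_right[OF assms])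

lemma has_sum_add_continuous:
  fixes g h :: "'e \<Rightarrow> 'v::{ab_group_add,t2_space}"
  assumes add: "continuous_on UNIV (\<lambda>(x::'v, y). x + y)"
    and g: "(g has_sum a) A" and h: "(h has_sum b) A"
  shows "((\<lambda>x. g x + h x) has_sum (a + b)) A"
proof -
  have "((\<lambda>F. (sum g F, sum h F)) \<longlongrightarrow> (a, b)) (finite_subsets_at_top A)"
    using g h unfolding has_sum_def by (rule tendsto_Pair)
  then have "((\<lambda>F. (\<lambda>(x, y). x + y) (sum g F, sum h F)) \<longlongrightarrow> (\<lambda>(x, y). x + y) (a, b))
      (finite_subsets_at_top A)"
    by (rule continuous_on_tendsto_compose[OF add]) auto
  then show ?thesis unfolding has_sum_def by (simp add: sum.distrib[abs_def])
qed

lemma tvs_has_sum_smul: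
  assumes tvs: "tvs smul" and g: "(g has_sum s) A"
  shows "((\<lambda>x. smul a (g x)) has_sum smul a s) A"
proof -
  have smul: "continuous_on UNIV (\<lambda>(a, x). smul a x)"
    using tvs unfolding tvs_def by blast
  have "((\<lambda>F. (a, sum g F)) \<longlongrightarrow> (a, s)) (finite_subsets_at_top A)"
    using g unfolding has_sum_def by (intro tendsto_Pair tendsto_const)
  then have "((\<lambda>F. (\<lambda>(a, x). smul a x) (a, sum g F)) \<longlongrightarrow> (\<lambda>(a, x). smul a x) (a, s))
      (finite_subsets_at_top A)"
    by (rule continuous_on_tendsto_compose[OF smul]) auto
  then show ?thesis unfolding has_sum_def by (simp add: tvs_smul_sum[OF tvs])
qed

lemma has_sum_single:
  fixes v :: "'v::{ab_group_add,t2_space}"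
  assumes "e \<in> A" shows "((\<lambda>x. if x = e then v else 0) has_sum v) A"
  by (rule has_sum_finite_neutralI[of "{e}"]) (use assms in auto)

lemma tvs_has_sum_update_add:
  fixes smul :: "'k::{field,topological_space} \<Rightarrow> 'v::{ab_group_add,t2_space} \<Rightarrow> 'v"
    and g :: "'e \<Rightarrow> 'v"
  assumes tvs: "tvs smul" and g: "(g has_sum a) A" and e: "e \<in> A"
  shows "(g(e := g e + v) has_sum a + v) A"
proof -
  have "continuous_on UNIV (\<lambda>(x::'v, y). x + y)" using tvs unfolding tvs_def by blast
  from has_sum_add_continuous[OF this g has_sum_single[OF e]]
  show ?thesis by (simp add: fun_upd_def if_distrib cong: if_cong)
qed

lemma convC_S_fhat_eq_iff:
  "c \<in> convC_S smul E f S \<and> fhat smul E f c = v \<longleftrightarrow>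
     (\<forall>x. x \<notin> S \<inter> E \<longrightarrow> c x = 0) \<and> ((\<lambda>x. smul (c x) (f x)) has_sum v) E"
  unfolding convC_S_def convC_def fhat_def has_sum_iff by blast

lemma mem_fhat_image_convC_S_iff:
  "v \<in> fhat smul E f ` convC_S smul E f S \<longleftrightarrow>
     (\<exists>c. (\<forall>x. x \<notin> S \<inter> E \<longrightarrow> c x = 0) \<and> ((\<lambda>x. smul (c x) (f x)) has_sum v) E)"
proof -
  have "v \<in> fhat smul E f ` convC_S smul E f S \<longleftrightarrow>
      (\<exists>c. c \<in> convC_S smul E f S \<and> fhat smul E f c = v)"
    by blast
  then show ?thesis by (simp only: convC_S_fhat_eq_iff)
qed

lemma indepL_subset: "S \<in> indepL smul E f \<Longrightarrow> S \<subseteq> E"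
  unfolding indepL_def by blast

lemma indepL_iff:
  assumes "tvs smul"
  shows "S \<in> indepL smul E f \<longleftrightarrow> S \<subseteq> E \<and>
     (\<forall>c. (\<forall>x. x \<notin> S \<longrightarrow> c x = 0) \<longrightarrow> ((\<lambda>x. smul (c x) (f x)) has_sum 0) E \<longrightarrow> c = (\<lambda>_. 0))"
proof -
  let ?Z = "{c \<in> convC_S smul E f S. fhat smul E f c = 0}"
  have zero: "(\<lambda>_. 0) \<in> ?Z"
    by (simp add: convC_S_fhat_eq_iff tvs_smul_zero_left[OF assms])
  have Z: "c \<in> ?Z \<longleftrightarrow>
      (\<forall>x. x \<notin> S \<longrightarrow> c x = 0) \<and> ((\<lambda>x. smul (c x) (f x)) has_sum 0) E"
    if "S \<subseteq> E" for c
    using convC_S_fhat_eq_iff[of c smul E f S 0] that by (simp add: Int_absorb2)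
  show ?thesis
    unfolding indepL_def using zero Z by blast
qed

lemma tvs_mem_fhat_image_convC_S:
  assumes tvs: "tvs smul" and "e \<in> S" "e \<in> E"
  shows "f e \<in> fhat smul E f ` convC_S smul E f S"
proof -
  have "(\<lambda>x. smul (if x = e then 1 else 0) (f x)) = (\<lambda>x. if x = e then f e else 0)"
    using tvs tvs_smul_zero_left[OF tvs] unfolding tvs_def by auto
  with has_sum_single[OF \<open>e \<in> E\<close>] \<open>e \<in> S\<close> \<open>e \<in> E\<close> show ?thesis
    unfolding mem_fhat_image_convC_S_iff by (intro exI[of _ "\<lambda>x. if x = e then 1 else 0"]) auto
qed

lemma tvs_mem_fhat_image_convC_S_if_insert_dependent:
  assumes tvs: "tvs smul" and S: "S \<in> indepL smul E f" and e: "e \<in> E"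
    and dep: "insert e S \<notin> indepL smul E f"
  shows "f e \<in> fhat smul E f ` convC_S smul E f S"
proof -
  have "S \<subseteq> E" using S by (rule indepL_subset)
  with e have "insert e S \<subseteq> E" by simp
  with dep obtain c where c_supp: "\<forall>x. x \<notin> insert e S \<longrightarrow> c x = 0"
    and c_sum: "((\<lambda>x. smul (c x) (f x)) has_sum 0) E" and c_nonzero: "c \<noteq> (\<lambda>_. 0)"
    unfolding indepL_iff[OF tvs] by blast
  have ce: "c e \<noteq> 0"
  proof
    assume "c e = 0"
    with c_supp have "\<forall>x. x \<notin> S \<longrightarrow> c x = 0" by auto
    with S c_sum have "c = (\<lambda>_. 0)" unfolding indepL_iff[OF tvs] by blast
    with c_nonzero show False ..
  qed
  define a where "a = - inverse (c e)"
  define d where "d x = (if x = e then 0 else a * c x)" for x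
  have "(\<lambda>x. smul a (smul (c x) (f x))) = (\<lambda>x. smul (a * c x) (f x))"
    using tvs unfolding tvs_def by simp
  with tvs_has_sum_smul[OF tvs c_sum, of a]
  have "((\<lambda>x. smul (a * c x) (f x)) has_sum 0) E"
    by (simp add: tvs_smul_zero_right[OF tvs])
  from tvs_has_sum_update_add[OF tvs this e, of "f e"]
  have "((\<lambda>x. smul (a * c x) (f x))(e := smul (a * c e) (f e) + f e) has_sum f e) E"
    by simp
  also have "(\<lambda>x. smul (a * c x) (f x))(e := smul (a * c e) (f e) + f e) = (\<lambda>x. smul (d x) (f x))"
    using ce by (auto simp: a_def d_def tvs_smul_minus_one[OF tvs] tvs_smul_zero_left[OF tvs])
  finally have "((\<lambda>x. smul (d x) (f x)) has_sum f e) E" .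
  moreover have "\<forall>x. x \<notin> S \<inter> E \<longrightarrow> d x = 0"
    using c_supp \<open>S \<subseteq> E\<close> by (auto simp: d_def)
  ultimately show ?thesis unfolding mem_fhat_image_convC_S_iff by blast
qed

lemma tvs_not_indepL_if_mem_fhat_image_convC_S:
  assumes tvs: "tvs smul" and e: "e \<in> E" "e \<notin> S"
    and repr: "f e \<in> fhat smul E f ` convC_S smul E f S"
    and T: "insert e S \<subseteq> T"
  shows "T \<notin> indepL smul E f"
proof
  assume T_indep: "T \<in> indepL smul E f"
  obtain c where c_supp: "\<forall>x. x \<notin> S \<inter> E \<longrightarrow> c x = 0"
    and c_sum: "((\<lambda>x. smul (c x) (f x)) has_sum f e) E"
    using repr unfolding mem_fhat_image_convC_S_iff by blast
  define d where "d = c(e := -1)"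
  from tvs_has_sum_update_add[OF tvs c_sum e(1), of "- f e"]
  have "((\<lambda>x. smul (c x) (f x))(e := smul (c e) (f e) + - f e) has_sum 0) E"
    by simp
  also have "(\<lambda>x. smul (c x) (f x))(e := smul (c e) (f e) + - f e) = (\<lambda>x. smul (d x) (f x))"
    using c_supp e by (auto simp: d_def tvs_smul_minus_one[OF tvs] tvs_smul_zero_left[OF tvs])
  finally have "((\<lambda>x. smul (d x) (f x)) has_sum 0) E" .
  moreover have "\<forall>x. x \<notin> T \<longrightarrow> d x = 0"
    using c_supp T by (auto simp: d_def)
  ultimately have "d = (\<lambda>_. 0)" using T_indep unfolding indepL_iff[OF tvs] by blast
  then have "d e = 0" by simp
  then show False by (simp add: d_def)
qed

theorem theorem6p2p1:
  fixes smul :: "'k::{field,topological_space} \<Rightarrow> 'v::{ab_group_add,t2_space} \<Rightarrow> 'v"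
    and E :: "'e set" and f :: "'e \<Rightarrow> 'v" and S :: "'e set"
  assumes "countable E"
    and "tvs smul"
    and "S \<in> indepL smul E f"
  shows "(\<not> (\<exists>T \<in> indepL smul E f. S \<subset> T)) \<longleftrightarrow>
         (\<forall>e \<in> E. f e \<in> fhat smul E f ` convC_S smul E f S)"
proof
  assume maximal: "\<not> (\<exists>T \<in> indepL smul E f. S \<subset> T)"
  show "\<forall>e \<in> E. f e \<in> fhat smul E f ` convC_S smul E f S"
  proof
    fix e assume e: "e \<in> E"
    show "f e \<in> fhat smul E f ` convC_S smul E f S"
    proof (cases "e \<in> S")
      case True
      with e show ?thesis by (intro tvs_mem_fhat_image_convC_S[OF assms(2)])
    next
      case False
      with maximal have "insert e S \<notin> indepL smul E f" by blast
      with assms(2,3) e show ?thesis by (rule tvs_mem_fhat_image_convC_S_if_insert_dependent)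
    qed
  qed
next
  assume repr: "\<forall>e \<in> E. f e \<in> fhat smul E f ` convC_S smul E f S"
  show "\<not> (\<exists>T \<in> indepL smul E f. S \<subset> T)"
  proof
    assume "\<exists>T \<in> indepL smul E f. S \<subset> T"
    then obtain T e where T: "T \<in> indepL smul E f" "S \<subset> T" and e: "e \<in> T" "e \<notin> S"
      by blast
    with indepL_subset have "e \<in> E" by blast
    with repr e T(2) have "T \<notin> indepL smul E f"
      by (intro tvs_not_indepL_if_mem_fhat_image_convC_S[OF assms(2)]) auto
    with T(1) show False by contradiction
  qed
qed

end
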